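(* Let $r\in\{3,5\}$, let $D=\mathrm{D}_{2r}$ be the dihedral group of order $2r$, and let $S\subseteq D$ with $S=S^{-1}$. Then there exists a nontrivial automorphism $\beta$ of $D$ that fixes $S$ setwise and inverts every element of the subgroup of order $r$ of $D$. *)

theory Defs
  imports "HOL-Algebra.Algebra"
begin

text \<open>The dihedral group of order 2r, for r \<ge> 3. The pair (k, s) stands for
  rho^k tau^s, where rho is a rotation of order r and tau a reflection with
  tau rho tau = rho^(-1). Hence (a,s)(b,t) = (a + (-1)^s b mod r, s xor t).\<close>

definition dihedral_mult :: "nat \<Rightarrow> nat \<times> bool \<Rightarrow> nat \<times> bool \<Rightarrow> nat \<times> bool" where
  "dihedral_mult r x y =
     ((if snd x then fst x + (r - fst y) else fst x + fst y) mod r, snd x \<noteq> snd y)"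

definition dihedral_group :: "nat \<Rightarrow> (nat \<times> bool) monoid" where
  "dihedral_group r = \<lparr>carrier = {0..<r} \<times> UNIV, monoid.mult = dihedral_mult r, one = (0, False)\<rparr>"

end

theory Submission
  imports Defs
begin

text \<open>The automorphism is conjugation by a reflection \<open>\<rho>\<^sup>m\<tau>\<close>. It inverts every
  rotation, and a subgroup of odd order \<open>r\<close> contains no reflection (an element of order 2),
  so it inverts the rotation subgroup. It maps the reflection \<open>\<rho>\<^sup>k\<tau>\<close> to \<open>\<rho>\<^bsup>2m - k\<^esup>\<tau>\<close>, so it
  preserves \<open>S = S\<inverse>\<close> as soon as the set \<open>T\<close> of reflection indices of \<open>S\<close> is symmetric
  under some \<open>k \<mapsto> c - k\<close> of \<open>\<int>/r\<close>; since \<open>r\<close> is odd, every \<open>c\<close> is of the form \<open>2m\<close>.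
  For \<open>r \<le> 5\<close>, \<open>T\<close> or its complement has at most two elements, and \<open>{a, b}\<close> is
  symmetric about \<open>c = a + b\<close>.\<close>

lemma (in group) conjugation_iso:
  assumes "g \<in> carrier G"
  shows "(\<lambda>x. g \<otimes> x \<otimes> inv g) \<in> iso G G"
proof -
  have "(\<lambda>x. g \<otimes> x \<otimes> inv g) \<in> hom G G"
    using assms by (intro homI) (simp_all add: m_assoc inv_solve_left)
  moreover have "bij_betw (\<lambda>x. g \<otimes> x \<otimes> inv g) (carrier G) (carrier G)"
    using assms
    by (intro bij_betw_byWitness[where f' = "\<lambda>x. inv g \<otimes> x \<otimes> g"])
       (auto simp: m_assoc[symmetric], auto simp: m_assoc)
  ultimately show ?thesis by (simp add: iso_def)
qed

lemma (in group) involution_notin_odd_order_subgroup: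
  assumes H: "subgroup H G" and odd: "odd (card H)"
    and x: "x \<in> H" "x \<otimes> x = \<one>"
  shows "x = \<one>"
proof (rule ccontr)
  assume "x \<noteq> \<one>"
  have xG: "x \<in> carrier G" using H x(1) subgroup.subset by blast
  then have "inv x = x" using x(2) by (simp add: inv_equality)
  then have "subgroup {\<one>, x} G"
    using xG x(2) by (intro subgroupI) auto
  moreover have "{\<one>, x} \<subseteq> H" using H x(1) subgroup.one_closed by blast
  ultimately have "subgroup {\<one>, x} (G\<lparr>carrier := H\<rparr>)"
    using H by (blast intro: subgroup_incl)
  then have "card (rcosets\<^bsub>G\<lparr>carrier := H\<rparr>\<^esub> {\<one>, x}) * card {\<one>, x} = card H"
    using group.lagrange[OF subgroup.subgroup_is_group[OF H is_group]] by (simp add: order_def)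
  then have "card {\<one>, x} dvd card H"
    by (metis dvd_triv_right)
  with \<open>x \<noteq> \<one>\<close> odd show False by (simp add: eval_nat_numeral)
qed

text \<open>The reflection \<open>k \<mapsto> c - k\<close> of \<open>\<int>/r\<close>, correct on representatives \<open>k \<le> r\<close>.\<close>

definition mirror :: "nat \<Rightarrow> nat \<Rightarrow> nat \<Rightarrow> nat" where
  "mirror r c k = (c + r - k) mod r"

lemma mirror_less: "0 < r \<Longrightarrow> mirror r c k < r"
  by (simp add: mirror_def)

lemma mirror_mirror:
  assumes "k < r"
  shows "mirror r c (mirror r c k) = k"
proof -
  have "int (mirror r c k) = (int c - int k + int r) mod int r"
    using assms by (simp add: mirror_def of_nat_mod of_nat_diff algebra_simps)
  also have "\<dots> = (int c - int k) mod int r"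
    by (rule mod_add_self2)
  finally have "int (mirror r c k) = (int c - int k) mod int r" .
  moreover have "mirror r c k < r"
    using assms by (simp add: mirror_less)
  ultimately have "int (mirror r c (mirror r c k)) = int k mod int r"
    by (simp add: mirror_def of_nat_mod of_nat_diff mod_simps)
  then show ?thesis
    using assms by (simp add: zmod_int[symmetric])
qed

lemma mirror_add_left: "b < r \<Longrightarrow> mirror r (a + b) a = b"
  by (simp add: mirror_def)

lemma mirror_cong:
  assumes "c mod r = c' mod r" "k \<le> r"
  shows "mirror r c k = mirror r c' k"
proof -
  have "(c + (r - k)) mod r = (c' + (r - k)) mod r"
    using assms(1) by (metis mod_add_left_eq)
  then show ?thesis
    using assms(2) by (simp add: mirror_def)
qed

lemma odd_double_mod_surj:
  fixes r c :: nat
  assumes "odd r"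
  shows "\<exists>m<r. 2 * m mod r = c mod r"
proof -
  define m where "m = c * (r + 1) div 2 mod r"
  have "2 * (c * (r + 1) div 2) = c * (r + 1)"
    using assms by simp
  then have "2 * m mod r = c * (r + 1) mod r"
    by (metis m_def mod_mult_right_eq)
  also have "\<dots> = c mod r"
    by (simp add: algebra_simps)
  finally have "2 * m mod r = c mod r" .
  moreover have "m < r"
    using odd_pos[OF assms] by (simp add: m_def)
  ultimately show ?thesis by auto
qed

lemma small_set_mirror_invariant:
  assumes "T \<subseteq> {..<r}" "card T \<le> 2"
  shows "\<exists>c. mirror r c ` T \<subseteq> T"
proof -
  have "finite T"
    using assms(1) finite_subset by blast
  with assms(2) consider "card T = 0" | "card T = 1" | "card T = 2"
    by linarith
  then consider "T = {}" | a where "T = {a}" | a b where "T = {a, b}"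
    using \<open>finite T\<close> by (metis card_0_eq card_1_singletonE card_2_iff)
  then show ?thesis
  proof cases
    case 2
    then show ?thesis
      using assms(1) by (intro exI[of _ "a + a"]) (simp add: mirror_add_left)
  next
    case 3
    with assms(1) have "mirror r (a + b) a = b" "mirror r (a + b) b = a"
      using mirror_add_left[of b r a] mirror_add_left[of a r b] by (simp_all add: add.commute)
    with 3 show ?thesis by auto
  qed simp
qed

lemma mirror_invariant_complement:
  assumes "mirror r c ` T \<subseteq> T"
  shows "mirror r c ` ({..<r} - T) \<subseteq> {..<r} - T"
proof
  fix k assume "k \<in> mirror r c ` ({..<r} - T)"
  then obtain l where l: "l < r" "l \<notin> T" "k = mirror r c l" by blast
  then have "mirror r c k = l" by (simp add: mirror_mirror)
  with assms l show "k \<in> {..<r} - T"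
    by (auto simp: mirror_less)
qed

lemma subset_of_short_cycle_mirror_invariant:
  assumes "r \<le> 5" "T \<subseteq> {..<r}"
  shows "\<exists>c. mirror r c ` T \<subseteq> T"
proof (cases "card T \<le> 2")
  case True
  then show ?thesis using assms(2) small_set_mirror_invariant by blast
next
  case False
  have "card T + card ({..<r} - T) = r"
    using assms(2) card_mono[of "{..<r}" T] by (simp add: card_Diff_subset finite_subset)
  with False assms(1) obtain c where "mirror r c ` ({..<r} - T) \<subseteq> {..<r} - T"
    using small_set_mirror_invariant[of "{..<r} - T" r] by auto
  then have "mirror r c ` ({..<r} - ({..<r} - T)) \<subseteq> {..<r} - ({..<r} - T)"
    by (rule mirror_invariant_complement)
  with assms(2) show ?thesis
    by (metis Diff_Diff_Int inf.absorb2)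
qed

lemma dihedral_group_carrier [simp]:
  "x \<in> carrier (dihedral_group r) \<longleftrightarrow> fst x < r"
  by (cases x) (simp add: dihedral_group_def)

lemma dihedral_group_mult [simp]:
  "x \<otimes>\<^bsub>dihedral_group r\<^esub> y = dihedral_mult r x y"
  by (simp add: dihedral_group_def)

lemma dihedral_group_one [simp]: "\<one>\<^bsub>dihedral_group r\<^esub> = (0, False)"
  by (simp add: dihedral_group_def)

lemma int_fst_dihedral_mult:
  assumes "fst y < r"
  shows "int (fst (dihedral_mult r x y))
           = (int (fst x) + (if snd x then - int (fst y) else int (fst y))) mod int r"
proof -
  have "int ((fst x + (r - fst y)) mod r) = (int (fst x) - int (fst y) + int r) mod int r"
    using assms by (simp add: of_nat_mod of_nat_diff algebra_simps)
  then show ?thesis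
    by (simp add: dihedral_mult_def of_nat_mod)
qed

lemma fst_dihedral_mult_less: "0 < r \<Longrightarrow> fst (dihedral_mult r x y) < r"
  by (simp add: dihedral_mult_def)

lemma snd_dihedral_mult [simp]: "snd (dihedral_mult r x y) = (snd x \<noteq> snd y)"
  by (simp add: dihedral_mult_def)

lemma group_dihedral_group:
  assumes "0 < r"
  shows "group (dihedral_group r)"
proof (rule groupI)
  fix x y z :: "nat \<times> bool"
  assume "x \<in> carrier (dihedral_group r)" "y \<in> carrier (dihedral_group r)"
    "z \<in> carrier (dihedral_group r)"
  then have "fst x < r" "fst y < r" "fst z < r" by simp_all
  then have "int (fst (dihedral_mult r (dihedral_mult r x y) z))
               = int (fst (dihedral_mult r x (dihedral_mult r y z)))"
    using assms
    by (cases "snd x"; cases "snd y")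
       (simp_all add: int_fst_dihedral_mult fst_dihedral_mult_less mod_simps algebra_simps)
  then show "x \<otimes>\<^bsub>dihedral_group r\<^esub> y \<otimes>\<^bsub>dihedral_group r\<^esub> z
               = x \<otimes>\<^bsub>dihedral_group r\<^esub> (y \<otimes>\<^bsub>dihedral_group r\<^esub> z)"
    by (auto simp: prod_eq_iff)
next
  fix x :: "nat \<times> bool"
  assume "x \<in> carrier (dihedral_group r)"
  then obtain k s where x: "x = (k, s)" "k < r" by (cases x) auto
  show "\<exists>y\<in>carrier (dihedral_group r). y \<otimes>\<^bsub>dihedral_group r\<^esub> x = \<one>\<^bsub>dihedral_group r\<^esub>"
    using x assms
    by (intro bexI[of _ "if s then (k, s) else ((r - k) mod r, False)"])
       (auto simp: dihedral_mult_def mod_simps)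
qed (use assms in \<open>auto simp: dihedral_mult_def\<close>)

lemma dihedral_inv_rotation:
  assumes "0 < r" "k < r"
  shows "inv\<^bsub>dihedral_group r\<^esub> (k, False) = ((r - k) mod r, False)"
  using assms
  by (intro group.inv_equality[OF group_dihedral_group])
     (auto simp: dihedral_mult_def mod_simps)

lemma dihedral_reflection_square:
  "k < r \<Longrightarrow> (k, True) \<otimes>\<^bsub>dihedral_group r\<^esub> (k, True) = \<one>\<^bsub>dihedral_group r\<^esub>"
  by (simp add: dihedral_mult_def)

lemma dihedral_inv_reflection:
  assumes "0 < r" "k < r"
  shows "inv\<^bsub>dihedral_group r\<^esub> (k, True) = (k, True)"
  using assms dihedral_reflection_square
  by (intro group.inv_equality[OF group_dihedral_group]) auto

lemma dihedral_conj_reflection_rotation: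
  assumes "m < r" "k < r"
  shows "(m, True) \<otimes>\<^bsub>dihedral_group r\<^esub> (k, False) \<otimes>\<^bsub>dihedral_group r\<^esub>
           inv\<^bsub>dihedral_group r\<^esub> (m, True) = inv\<^bsub>dihedral_group r\<^esub> (k, False)"
proof -
  have "m + (r - k) + (r - m) = (r - k) + r"
    using assms by simp
  then have "((m + (r - k)) mod r + (r - m)) mod r = (r - k) mod r"
    by (metis mod_add_left_eq mod_add_self2)
  then show ?thesis
    using assms by (simp add: dihedral_inv_reflection dihedral_inv_rotation dihedral_mult_def)
qed

lemma dihedral_conj_reflection_reflection:
  assumes "m < r" "k < r"
  shows "(m, True) \<otimes>\<^bsub>dihedral_group r\<^esub> (k, True) \<otimes>\<^bsub>dihedral_group r\<^esub>
           inv\<^bsub>dihedral_group r\<^esub> (m, True) = (mirror r (2 * m) k, True)"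
proof -
  have "m + (r - k) + m = 2 * m + r - k"
    using assms by simp
  then have "((m + (r - k)) mod r + m) mod r = (2 * m + r - k) mod r"
    by (metis mod_add_left_eq)
  then show ?thesis
    using assms by (simp add: dihedral_inv_reflection dihedral_mult_def mirror_def)
qed

lemma finite_dihedral_group_carrier: "finite (carrier (dihedral_group r))"
  by (simp add: dihedral_group_def)

lemma odd_dihedral_automorphism_inverting_rotations:
  fixes r c :: nat and S :: "(nat \<times> bool) set"
  defines "D \<equiv> dihedral_group r"
  assumes r: "odd r" "3 \<le> r"
    and S: "S \<subseteq> carrier D" "(\<lambda>x. inv\<^bsub>D\<^esub> x) ` S = S"
    and mirror_S: "mirror r c ` {k. (k, True) \<in> S} \<subseteq> {k. (k, True) \<in> S}"
  shows "\<exists>\<beta>. \<beta> \<in> iso D D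
            \<and> (\<exists>x\<in>carrier D. \<beta> x \<noteq> x)
            \<and> \<beta> ` S = S
            \<and> (\<forall>H. subgroup H D \<and> card H = r \<longrightarrow> (\<forall>x\<in>H. \<beta> x = inv\<^bsub>D\<^esub> x))"
proof -
  have "0 < r" using r by simp
  interpret group D
    unfolding D_def using \<open>0 < r\<close> by (rule group_dihedral_group)
  obtain m where m: "m < r" "2 * m mod r = c mod r"
    using odd_double_mod_surj[OF r(1)] by blast
  define \<beta> where "\<beta> x = (m, True) \<otimes>\<^bsub>D\<^esub> x \<otimes>\<^bsub>D\<^esub> inv\<^bsub>D\<^esub> (m, True)" for x
  have \<beta>_rotation: "\<beta> (k, False) = inv\<^bsub>D\<^esub> (k, False)" if "k < r" for k
    using m that dihedral_conj_reflection_rotation[of m r k] by (simp add: \<beta>_def D_def)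
  have \<beta>_reflection: "\<beta> (k, True) = (mirror r c k, True)" if "k < r" for k
    using m that dihedral_conj_reflection_reflection[of m r k]
    by (simp add: \<beta>_def D_def mirror_cong[of "2 * m" r c])
  have iso: "\<beta> \<in> iso D D"
    unfolding \<beta>_def using m by (intro conjugation_iso) (simp add: D_def)
  have "\<beta> (1, False) \<noteq> (1, False)"
    using r \<beta>_rotation[of 1] dihedral_inv_rotation[of r 1] by (simp add: D_def)
  then have nontrivial: "\<exists>x\<in>carrier D. \<beta> x \<noteq> x"
    using r(2) by (intro bexI[of _ "(1, False)"]) (simp_all add: D_def)
  have "\<beta> ` S \<subseteq> S"
  proof
    fix y assume "y \<in> \<beta> ` S"
    then obtain k s where ks: "(k, s) \<in> S" "y = \<beta> (k, s)" "k < r"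
      using S(1) by (auto simp: D_def)
    show "y \<in> S"
    proof (cases s)
      case True
      with ks mirror_S show ?thesis by (auto simp: \<beta>_reflection)
    next
      case False
      with ks S(2) show ?thesis by (auto simp: \<beta>_rotation)
    qed
  qed
  moreover have "finite S"
    using S(1) finite_dihedral_group_carrier finite_subset unfolding D_def by blast
  moreover have "inj_on \<beta> S"
    using iso S(1) by (auto simp: iso_def bij_betw_def intro: inj_on_subset)
  ultimately have "\<beta> ` S = S"
    by (simp add: endo_inj_surj)
  moreover have "\<beta> x = inv\<^bsub>D\<^esub> x" if "subgroup H D" "card H = r" "x \<in> H" for H x
  proof -
    have "x \<in> carrier D"
      using that subgroup.subset by blast
    then obtain k s where x: "x = (k, s)" "k < r"
      by (cases x) (simp add: D_def)
    have "\<not> s"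
    proof
      assume s
      then have "x \<otimes>\<^bsub>D\<^esub> x = \<one>\<^bsub>D\<^esub>"
        using x dihedral_reflection_square by (simp add: D_def)
      then have "x = \<one>\<^bsub>D\<^esub>"
        using involution_notin_odd_order_subgroup[OF that(1) _ that(3)] that(2) r(1) by blast
      with \<open>s\<close> x show False by (simp add: D_def)
    qed
    with x show ?thesis by (simp add: \<beta>_rotation)
  qed
  ultimately show ?thesis
    using iso nontrivial by (intro exI[of _ \<beta>]) blast
qed

theorem lemma4p9:
  fixes r :: nat and S :: "(nat \<times> bool) set"
  defines "D \<equiv> dihedral_group r"
  assumes "r \<in> {3, 5}"
    and "S \<subseteq> carrier D"
    and "(\<lambda>x. inv\<^bsub>D\<^esub> x) ` S = S"
  shows "\<exists>\<beta>. \<beta> \<in> iso D D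
            \<and> (\<exists>x\<in>carrier D. \<beta> x \<noteq> x)
            \<and> \<beta> ` S = S
            \<and> (\<forall>H. subgroup H D \<and> card H = r \<longrightarrow> (\<forall>x\<in>H. \<beta> x = inv\<^bsub>D\<^esub> x))"
proof -
  have r: "odd r" "3 \<le> r" "r \<le> 5"
    using assms(2) by auto
  have "{k. (k, True) \<in> S} \<subseteq> {..<r}"
    using assms(3) by (auto simp: D_def)
  then obtain c where "mirror r c ` {k. (k, True) \<in> S} \<subseteq> {k. (k, True) \<in> S}"
    using subset_of_short_cycle_mirror_invariant r(3) by blast
  then show ?thesis
    unfolding D_def using r assms(3,4)
    by (intro odd_dihedral_automorphism_inverting_rotations) (simp_all add: D_def)
qed

end
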